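(* Fix $0<s\le1$, let $\rho:=\rho(s)=e^s/s$, and let $\phi:(0,1]\to[1,\infty)$ be integrable. If there exists a tight $(\rho,\chi)$-bidding profile induced by $\phi$, then for all $x\in(0,1]$, \[ \phi(x)\ge\max\left(1,\ s\chi\, e^{s(x-1)}\right). \]
   Context: Given $1<\chi\le\rho$, a $(\rho,\chi)$-bidding profile is a non-decreasing, left-continuous $G:\mathbb{R}\to(0,\infty)$ with (offset) $G(x)<1$ for $x<0$ and $G(x)\ge1$ for $x>0$; (robustness) $\int_{-\infty}^{x+1}G(t)\,\mathrm{d} t\le\rho G(x)$ for all $x\in\mathbb{R}$; (consistency) $\int_{-\infty}^1G(t)\,\mathrm{d} t\le\chi$. It is tight if additionally $\int_{-\infty}^{x+1}G(t)\,\mathrm{d} t=\rho G(x)$ for all $x\le0$ and $\int_{-\infty}^1G(t)\,\mathrm{d} t=\chi$. It is induced by $\phi$ if $G|_{(0,1]}\equiv\phi$. *)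

theory Defs
  imports "HOL-Analysis.Analysis"
begin

text \<open>Integrals over half-lines are Henstock-Kurzweil
integrals over {..a}; since G is positive and monotone this agrees with the Lebesgue
integral, and the inequalities implicitly require finiteness (integrability).\<close>

definition bidding_profile :: "real \<Rightarrow> real \<Rightarrow> (real \<Rightarrow> real) \<Rightarrow> bool" where
  "bidding_profile rho chi G \<longleftrightarrow>
     1 < chi \<and> chi \<le> rho \<and>
     mono G \<and> (\<forall>x. 0 < G x) \<and> (\<forall>x. continuous (at_left x) G) \<and>
     (\<forall>x<0. G x < 1) \<and> (\<forall>x>0. 1 \<le> G x) \<and>
     (\<forall>x. G integrable_on {..x+1} \<and> integral {..x+1} G \<le> rho * G x) \<and>
     G integrable_on {..1} \<and> integral {..1} G \<le> chi"

definition tight_bidding_profile :: "real \<Rightarrow> real \<Rightarrow> (real \<Rightarrow> real) \<Rightarrow> bool" where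
  "tight_bidding_profile rho chi G \<longleftrightarrow>
     bidding_profile rho chi G \<and>
     (\<forall>x\<le>0. integral {..x+1} G = rho * G x) \<and>
     integral {..1} G = chi"

definition induced_by :: "(real \<Rightarrow> real) \<Rightarrow> (real \<Rightarrow> real) \<Rightarrow> bool" where
  "induced_by G \<phi> \<longleftrightarrow> (\<forall>x\<in>{0<..1}. G x = \<phi> x)"

end

theory Submission
  imports Defs
begin

text \<open>Let \<open>I(t) = \<integral>\<^sub>-\<^sub>\<infinity>\<^sup>t G\<close>, so that \<open>I' = G\<close>, and let \<open>m\<close> be the infimum of the
  growth rate \<open>G/I\<close>. Then \<open>I(t+1) \<ge> e\<^sup>m I(t)\<close>, while robustness gives \<open>I(t+1) \<le> \<rho> G(t)\<close>;
  hence \<open>m \<ge> e\<^sup>m/\<rho> = s e\<^sup>m\<^sup>-\<^sup>s\<close>, and since \<open>s \<le> 1\<close> this forces \<open>m \<ge> s\<close>. Integrating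
  \<open>G \<ge> s I\<close> from \<open>1\<close> to \<open>1+x\<close> and using robustness at \<open>x\<close> once more gives
  \<open>\<rho> G(x) \<ge> I(1+x) \<ge> e\<^sup>s\<^sup>x I(1) = e\<^sup>s\<^sup>x \<chi>\<close>.\<close>

lemma exp_growth_lower_bound:
  fixes F G :: "real \<Rightarrow> real"
  assumes increment: "\<And>t h. 0 \<le> h \<Longrightarrow> F t + h * G t \<le> F (t + h)"
    and rate: "\<And>t. c * F t \<le> G t" and "0 \<le> c" and F_nonneg: "\<And>t. 0 \<le> F t"
    and "0 \<le> d"
  shows "exp (c * d) * F a \<le> F (a + d)"
proof -
  have euler_step: "(1 + c * h) * F t \<le> F (t + h)" if "0 \<le> h" for t h
  proof -
    have "h * (c * F t) \<le> h * G t" using rate that by (simp add: mult_left_mono)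
    thus ?thesis using increment[OF that, of t] by (simp add: algebra_simps)
  qed
  have euler: "(1 + c * h) ^ k * F a \<le> F (a + real k * h)" if "0 \<le> h" for h k
  proof (induction k)
    case 0
    then show ?case by simp
  next
    case (Suc k)
    have "(1 + c * h) ^ Suc k * F a = (1 + c * h) * ((1 + c * h) ^ k * F a)" by simp
    also have "\<dots> \<le> (1 + c * h) * F (a + real k * h)"
      using Suc that \<open>0 \<le> c\<close> by (intro mult_left_mono) auto
    also have "\<dots> \<le> F (a + real k * h + h)" using euler_step[OF that] by simp
    finally show ?case by (simp add: algebra_simps)
  qed
  have "(\<lambda>n. (1 + (c * d) / real n) ^ n * F a) \<longlonglongrightarrow> exp (c * d) * F a"
    by (intro tendsto_mult tendsto_exp_limit_sequentially tendsto_const)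
  moreover have "\<forall>\<^sub>F n in sequentially. (1 + (c * d) / real n) ^ n * F a \<le> F (a + d)"
    using eventually_gt_at_top[of 0]
  proof eventually_elim
    case (elim n)
    have "(1 + c * (d / real n)) ^ n * F a \<le> F (a + real n * (d / real n))"
      by (rule euler) (use \<open>0 \<le> d\<close> in auto)
    thus ?case using elim by simp
  qed
  ultimately show ?thesis by (rule tendsto_upperbound) simp
qed

lemma le_if_scaled_exp_le:
  fixes s m :: real
  assumes "0 < s" "s \<le> 1" and le: "s * exp (m - s) \<le> m"
  shows "s \<le> m"
proof (rule ccontr)
  assume "\<not> s \<le> m"
  then have "1 + (m - s) < exp (m - s)"
    using exp_minus_greater[of "s - m"] by simp
  then have "s * (1 + (m - s)) < m"
    using le \<open>0 < s\<close> by (smt (verit) mult_strict_left_mono)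
  then have "0 < (m - s) * (1 - s)" by (simp add: algebra_simps)
  moreover have "(m - s) * (1 - s) \<le> 0"
    using \<open>\<not> s \<le> m\<close> \<open>s \<le> 1\<close> by (intro mult_nonpos_nonneg) auto
  ultimately show False by linarith
qed

locale robust_profile =
  fixes rho :: real and G :: "real \<Rightarrow> real"
  assumes mono: "mono G" and pos: "\<And>x. 0 < G x"
    and integrable: "\<And>x. G integrable_on {..x}"
    and robust: "\<And>x. integral {..x + 1} G \<le> rho * G x"
begin

lemma integrable_on_interval: "G integrable_on {a..b}"
  by (rule integrable_on_mono_on) (use mono in \<open>auto simp: mono_def monotone_on_def\<close>)

lemma integral_increment:
  assumes "0 \<le> h"
  shows "integral {..t} G + h * G t \<le> integral {..t + h} G"
proof -
  have "{..t + h} = {..t} \<union> {t..t + h}" and "{..t} \<inter> {t..t + h} = {t}"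
    using assms by auto
  then have split: "integral {..t + h} G = integral {..t} G + integral {t..t + h} G"
    using integrable[of t] integrable_on_interval by simp
  have "integral {t..t + h} (\<lambda>_. G t) \<le> integral {t..t + h} G"
    using integrable_on_interval mono by (intro integral_le) (auto simp: mono_def)
  then show ?thesis using split assms by simp
qed

lemma integral_pos: "0 < integral {..t} G"
proof -
  have "0 \<le> integral {..t - 1} G"
    using integrable pos by (intro integral_nonneg) (auto intro: less_imp_le)
  then show ?thesis using integral_increment[of 1 "t - 1"] pos[of "t - 1"] by simp
qed

lemma growth_rate_ge:
  assumes "0 < s" "s \<le> 1" and rho: "rho = exp s / s"
  shows "s * integral {..t} G \<le> G t"
proof -
  define w where "w t = G t / integral {..t} G" for t
  define m where "m = Inf (range w)"
  have w_pos: "0 < w t" for t using pos integral_pos by (simp add: w_def)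
  have "bdd_below (range w)" using w_pos by (intro bdd_belowI[of _ 0]) (auto intro: less_imp_le)
  then have m_le: "m \<le> w t" for t unfolding m_def by (intro cInf_lower) auto
  have "0 \<le> m" unfolding m_def by (rule cInf_greatest) (auto intro: less_imp_le w_pos)
  have rate_m: "m * integral {..t} G \<le> G t" for t
    using m_le[of t] integral_pos[of t] by (simp add: w_def pos_le_divide_eq)
  have "exp m / rho \<le> w t" for t
  proof -
    have "exp m * integral {..t} G \<le> integral {..t + 1} G"
      using exp_growth_lower_bound[of "\<lambda>t. integral {..t} G" G m, OF integral_increment rate_m,
          of 1 t]
        \<open>0 \<le> m\<close> integral_pos by (simp add: less_imp_le)
    then have "exp m * integral {..t} G \<le> rho * G t" using robust[of t] by linarith
    then show ?thesis using integral_pos[of t] \<open>0 < s\<close> by (simp add: w_def rho field_simps)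
  qed
  then have "exp m / rho \<le> m" unfolding m_def by (intro cInf_greatest) auto
  then have "s * exp (m - s) \<le> m" using \<open>0 < s\<close> by (simp add: rho exp_diff field_simps)
  then have "s \<le> m" using le_if_scaled_exp_le assms(1,2) by blast
  then show ?thesis
    using rate_m[of t] integral_pos[of t] by (smt (verit) mult_right_mono)
qed

lemma exp_lower_bound:
  assumes "0 < s" "s \<le> 1" and rho: "rho = exp s / s" and "0 \<le> x"
  shows "s * integral {..1} G * exp (s * (x - 1)) \<le> G x"
proof -
  have "exp (s * x) * integral {..1} G \<le> integral {..1 + x} G"
    using exp_growth_lower_bound[of "\<lambda>t. integral {..t} G" G s, OF integral_increment
        growth_rate_ge[OF assms(1-3)]] assms(1,4) integral_pos by (simp add: less_imp_le)
  also have "\<dots> \<le> rho * G x" using robust[of x] by (simp add: add.commute)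
  finally show ?thesis
    using \<open>0 < s\<close> by (simp add: rho exp_diff right_diff_distrib field_simps)
qed

end

lemma robust_profile_if_bidding_profile:
  assumes "bidding_profile rho chi G"
  shows "robust_profile rho G"
proof
  show "G integrable_on {..x}" for x
    using assms unfolding bidding_profile_def by (metis diff_add_cancel)
qed (use assms in \<open>auto simp: bidding_profile_def\<close>)

theorem lemma9:
  fixes s chi :: real and \<phi> :: "real \<Rightarrow> real"
  assumes "0 < s" and "s \<le> 1"
    and "\<forall>x\<in>{0<..1}. 1 \<le> \<phi> x"
    and "\<phi> integrable_on {0<..1}"
    and "\<exists>G. tight_bidding_profile (exp s / s) chi G \<and> induced_by G \<phi>"
  shows "\<forall>x\<in>{0<..1}. \<phi> x \<ge> max 1 (s * chi * exp (s * (x - 1)))"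
proof
  obtain G where tight: "tight_bidding_profile (exp s / s) chi G" and induced: "induced_by G \<phi>"
    using assms(5) by blast
  then interpret robust_profile "exp s / s" G
    by (intro robust_profile_if_bidding_profile) (auto simp: tight_bidding_profile_def)
  have chi: "integral {..1} G = chi" using tight by (simp add: tight_bidding_profile_def)
  fix x :: real
  assume x: "x \<in> {0<..1}"
  then have "\<phi> x = G x" using induced by (simp add: induced_by_def)
  moreover have "1 \<le> \<phi> x" using assms(3) x by blast
  moreover have "s * chi * exp (s * (x - 1)) \<le> G x"
    using exp_lower_bound[OF assms(1,2) refl, of x] x chi by simp
  ultimately show "\<phi> x \<ge> max 1 (s * chi * exp (s * (x - 1)))" by simp
qed

end
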